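(* Let $p\in H(\mathbb{D})$ with $\operatorname{Re}p>0$ and $p(0)=b$ (so $b>0$ is assumed real), and let $a\in\mathbb{R}$. Consider the radial Loewner PDE $\frac{\partial f}{\partial t}(z,t)=-zf'(z,t)p(e^{-iat}z)$, $f(z,0)=z$, on $\mathbb{D}\times[0,\infty)$. Let $\phi$ be the holomorphic function on $\mathbb{D}$ with $\phi(0)=0$, $\phi'(0)=1$, satisfying $z\phi'(z)/\phi(z)=(b-ia)/(p(z)-ia)$, equivalently $zp(z)=iaz+(b-ia)\phi(z)/\phi'(z)$. Then $\phi$ is an $(\operatorname{Arccot}(a/b)-\tfrac{\pi}{2})$-spirallike function of $\mathbb{D}$, and the Loewner flow is $$f(z,t)=\phi^{-1}\big(e^{-(b-ia)t}\phi(e^{-iat}z)\big),\qquad z\in\mathbb{D},\ t\ge0.$$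
   Context: $\operatorname{Arccot}$ takes values in $(0,\pi)$. A simply connected domain $D\ni0$ is $\psi$-spirallike if for every $w_0\in D$ the arc $\{w_0\exp(-e^{i\psi}s):0\le s\le\infty\}$ lies in $D$; a univalent $f\in H(\mathbb{D})$ with $f(0)=0$ is $\psi$-spirallike if $f(\mathbb{D})$ is $\psi$-spirallike. *)

theory Defs
  imports "HOL-Analysis.Analysis"
begin

definition arccot :: "real \<Rightarrow> real" where
  "arccot x = pi / 2 - arctan x"

text \<open>A psi-spirallike domain: a simply connected domain containing 0 such that
  for every w0 in D the arc w0 * exp(-e^(i psi) s), 0 <= s <= infinity, lies in D
  (the endpoint s = infinity is the point 0).\<close>
definition spirallike_domain :: "real \<Rightarrow> complex set \<Rightarrow> bool" where
  "spirallike_domain \<psi> D \<longleftrightarrow>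
     open D \<and> connected D \<and> simply_connected D \<and> 0 \<in> D \<and>
     (\<forall>w0\<in>D. \<forall>s::real. s \<ge> 0 \<longrightarrow> w0 * exp (- exp (\<i> * of_real \<psi>) * of_real s) \<in> D)"

definition spirallike_fun :: "real \<Rightarrow> (complex \<Rightarrow> complex) \<Rightarrow> bool" where
  "spirallike_fun \<psi> f \<longleftrightarrow>
     f holomorphic_on ball 0 1 \<and> inj_on f (ball 0 1) \<and> f 0 = 0 \<and>
     spirallike_domain \<psi> (f ` ball 0 1)"

definition loewner_solution ::
  "(complex \<Rightarrow> complex) \<Rightarrow> real \<Rightarrow> (complex \<Rightarrow> real \<Rightarrow> complex) \<Rightarrow> bool" where
  "loewner_solution p a f \<longleftrightarrow>
     (\<forall>t\<ge>0. (\<lambda>z. f z t) holomorphic_on ball 0 1) \<and>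
     continuous_on (ball 0 1 \<times> {0..}) (\<lambda>(z, t). f z t) \<and>
     (\<forall>z\<in>ball 0 1. f z 0 = z) \<and>
     (\<forall>z\<in>ball 0 1. \<forall>t\<ge>0.
        ((\<lambda>s. f z s) has_vector_derivative
           (- z * deriv (\<lambda>w. f w t) z * p (exp (- \<i> * of_real (a * t)) * z)))
        (at t within {0..}))"

end

theory Submission
  imports Defs "HOL-Complex_Analysis.Complex_Analysis"
begin

text \<open>Put \<open>c = b - i a\<close> and \<open>q = p - i a\<close>. The hypothesis \<open>z \<phi>'/\<phi> = c/q\<close> with \<open>Re q > 0\<close> says
  that \<open>Re (z \<phi>'/(c \<phi>)) > 0\<close>; in the coordinate \<open>\<zeta> = log z\<close> this is the Noshiro-Warschawski
  condition, so \<open>\<phi>\<close> is univalent. Pulled back by \<open>\<phi>\<close>, the spiral flow \<open>w \<mapsto> e\<^sup>-\<^sup>c\<^sup>t w\<close> becomes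
  the ODE \<open>y' = - y q(y)\<close>, along which \<open>|y|\<close> decreases; hence \<open>\<phi>(\<D>)\<close> is invariant under the
  flow, which is spirallike with \<open>e\<^sup>i\<^sup>\<psi> = c/|c|\<close>, i.e. \<open>\<psi> = arccot(a/b) - \<pi>/2\<close>.
  The same conjugation shows that \<open>f(z,t) = \<phi>\<^sup>-\<^sup>1(e\<^sup>-\<^sup>c\<^sup>t \<phi>(e\<^sup>-\<^sup>i\<^sup>a\<^sup>t z))\<close> solves the Loewner
  equation. Conversely, every solution is constant along the characteristics
  \<open>\<zeta>' = \<zeta> p(e\<^sup>-\<^sup>i\<^sup>a\<^sup>s \<zeta>)\<close>, and the characteristic ending at \<open>(z,t)\<close> starts at
  \<open>f(z,t)\<close>, which gives uniqueness.\<close>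

lemma Noshiro_Warschawski:
  fixes G :: "complex \<Rightarrow> complex"
  assumes "convex S" "open S" "G holomorphic_on S"
    and pos: "\<And>z. z \<in> S \<Longrightarrow> Re (deriv G z * \<mu>) > 0"
  shows "inj_on G S"
proof (rule inj_onI, rule ccontr)
  fix x y assume x: "x \<in> S" and y: "y \<in> S" and eq: "G x = G y" and "x \<noteq> y"
  define d where "d = y - x"
  have "d \<noteq> 0" using \<open>x \<noteq> y\<close> by (simp add: d_def)
  define r where "r s = Re (\<mu> * G (x + of_real s * d) / d)" for s :: real
  have seg: "x + of_real s * d \<in> S" if "0 \<le> s" "s \<le> 1" for s
  proof -
    have "x + of_real s * d = (1 - s) *\<^sub>R x + s *\<^sub>R y"
      by (simp add: d_def scaleR_conv_of_real algebra_simps)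
    thus ?thesis using convexD_alt[OF assms(1) x y, of s] that by simp
  qed
  have r': "DERIV r s :> Re (deriv G (x + of_real s * d) * \<mu>)" if "0 \<le> s" "s \<le> 1" for s
  proof -
    have "(G has_field_derivative deriv G (x + of_real s * d)) (at (x + of_real s * d))"
      using assms(2,3) seg[OF that] holomorphic_derivI by blast
    moreover have "((\<lambda>w. x + w * d) has_field_derivative d) (at (of_real s))"
      by (auto intro!: derivative_eq_intros)
    ultimately have "((\<lambda>w. G (x + w * d)) has_field_derivative deriv G (x + of_real s * d) * d)
            (at (of_real s))"
      by (rule DERIV_chain2)
    hence "((\<lambda>w. \<mu> * G (x + w * d) / d) has_field_derivative deriv G (x + of_real s * d) * \<mu>)
            (at (of_real s))"
      using \<open>d \<noteq> 0\<close> by (auto intro!: derivative_eq_intros simp: field_simps)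
    from has_field_derivative_Re[OF has_vector_derivative_real_field[OF this]]
    show ?thesis unfolding r_def by (simp add: o_def)
  qed
  obtain s where s: "0 < s" "s < 1" "r 1 - r 0 = Re (deriv G (x + of_real s * d) * \<mu>)"
    using MVT2[of 0 1 r "\<lambda>s. Re (deriv G (x + of_real s * d) * \<mu>)"] r' by force
  moreover have "r 1 = r 0" unfolding r_def using eq by (simp add: d_def)
  ultimately show False using pos[OF seg, of s] by simp
qed

lemma holomorphic_factor_z_exp:
  assumes "convex S" "open S" "0 \<in> S" and holo: "\<phi> holomorphic_on S"
    and "\<phi> 0 = 0" "deriv \<phi> 0 \<noteq> 0" and nz: "\<And>z. z \<in> S \<Longrightarrow> z \<noteq> 0 \<Longrightarrow> \<phi> z \<noteq> 0"
  obtains L where "L holomorphic_on S" "\<And>z. z \<in> S \<Longrightarrow> \<phi> z = z * exp (L z)"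
proof -
  define h where "h z = (if z = 0 then deriv \<phi> 0 else (\<phi> z - \<phi> 0) / (z - 0))" for z
  have "h holomorphic_on S"
    unfolding h_def using pole_lemma[OF holo] assms(2,3) interior_open by fastforce
  moreover have "h z \<noteq> 0" if "z \<in> S" for z
    using nz[OF that] assms(5,6) by (auto simp: h_def)
  ultimately obtain L where "L holomorphic_on S" "\<And>z. z \<in> S \<Longrightarrow> exp (L z) = h z"
    using holomorphic_logarithm_exists[OF assms(1,2)] assms(3) by metis
  with that show ?thesis using assms(5) by (simp add: h_def)
qed

lemma inj_on_ball_if_inj_on_log_lift:
  assumes \<phi>_eq: "\<And>z. z \<in> ball 0 1 \<Longrightarrow> \<phi> z = z * exp (L z)"
    and inj: "inj_on (\<lambda>\<zeta>. \<zeta> + L (exp \<zeta>)) {\<zeta>. Re \<zeta> < 0}"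
  shows "inj_on \<phi> (ball 0 1)"
proof (rule inj_onI)
  fix z1 z2 assume z1: "z1 \<in> ball 0 1" and z2: "z2 \<in> ball 0 1" and eq: "\<phi> z1 = \<phi> z2"
  show "z1 = z2"
  proof (cases "z1 = 0 \<or> z2 = 0")
    case True thus ?thesis using eq z1 z2 \<phi>_eq by auto
  next
    case False
    define G where "G \<zeta> = \<zeta> + L (exp \<zeta>)" for \<zeta>
    have "exp (G (Ln z1)) = exp (G (Ln z2))"
      using eq False z1 z2 \<phi>_eq by (simp add: G_def exp_add)
    then obtain n :: int where n: "G (Ln z1) = G (Ln z2) + of_int (2 * n) * pi * \<i>"
      unfolding exp_eq by blast
    define \<zeta> where "\<zeta> = Ln z2 + of_int (2 * n) * pi * \<i>"
    have "exp \<zeta> = z2"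
      using False by (simp add: \<zeta>_def exp_add exp_eq_1)
    hence "G \<zeta> = G (Ln z1)"
      using n False by (simp add: G_def \<zeta>_def)
    moreover have "Re \<zeta> < 0" "Re (Ln z1) < 0" using z1 z2 False by (simp_all add: \<zeta>_def)
    ultimately have "\<zeta> = Ln z1"
      using inj_onD[OF inj, of \<zeta> "Ln z1"] unfolding G_def by blast
    thus ?thesis using \<open>exp \<zeta> = z2\<close> False by auto
  qed
qed

lemma inj_on_ball_if_Re_spirallike:
  assumes holo: "\<phi> holomorphic_on ball 0 1" and "\<phi> 0 = 0" "deriv \<phi> 0 \<noteq> 0"
    and Re_pos: "\<And>z. z \<in> ball 0 1 \<Longrightarrow> z \<noteq> 0 \<Longrightarrow> Re (z * deriv \<phi> z / (c * \<phi> z)) > 0"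
  shows "inj_on \<phi> (ball 0 1)"
proof -
  have "\<phi> z \<noteq> 0" if "z \<in> ball 0 1" "z \<noteq> 0" for z
    using Re_pos[OF that] by auto
  then obtain L where L: "L holomorphic_on ball 0 1"
    and \<phi>_eq: "\<And>z. z \<in> ball 0 1 \<Longrightarrow> \<phi> z = z * exp (L z)"
    using holomorphic_factor_z_exp[of "ball 0 1" \<phi>] assms by auto
  define H where "H = {\<zeta>::complex. Re \<zeta> < 0}"
  have exp_H: "exp \<zeta> \<in> ball 0 1" if "\<zeta> \<in> H" for \<zeta>
    using that by (simp add: H_def)
  text \<open>In the logarithmic coordinate \<open>\<zeta> = log z\<close> the map \<open>\<phi>\<close> becomes \<open>G\<close>, and
    \<open>G' \<zeta> = z \<phi>' z / \<phi> z\<close> has positive real part after division by \<open>c\<close>.\<close>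
  define G where "G \<zeta> = \<zeta> + L (exp \<zeta>)" for \<zeta>
  have "G holomorphic_on H"
    unfolding G_def using exp_H
    by (intro holomorphic_intros holomorphic_on_compose_gen[OF _ L, unfolded o_def]) auto
  moreover have "Re (deriv G \<zeta> * (1 / c)) > 0" if "\<zeta> \<in> H" for \<zeta>
  proof -
    define z where "z = exp \<zeta>"
    have z: "z \<in> ball 0 1" "z \<noteq> 0" using exp_H[OF that] by (simp_all add: z_def)
    have L': "(L has_field_derivative deriv L z) (at z)"
      using holomorphic_derivI[OF L _ z(1)] by simp
    have "((\<lambda>w. w * exp (L w)) has_field_derivative exp (L z) * (1 + z * deriv L z)) (at z)"
      by (auto intro!: derivative_eq_intros L' simp: algebra_simps)
    hence "(\<phi> has_field_derivative exp (L z) * (1 + z * deriv L z)) (at z)"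
      by (rule has_field_derivative_transform_within_open[of _ _ _ "ball 0 1"]) (use z \<phi>_eq in auto)
    hence "deriv \<phi> z = exp (L z) * (1 + z * deriv L z)"
      by (rule DERIV_imp_deriv)
    hence "z * deriv \<phi> z / (c * \<phi> z) = (1 + z * deriv L z) / c"
      using z \<phi>_eq by simp
    moreover have "(G has_field_derivative 1 + deriv L z * z) (at \<zeta>)"
      using DERIV_chain2[OF L'[unfolded z_def] DERIV_exp]
      unfolding G_def z_def by (auto intro!: derivative_eq_intros)
    hence "deriv G \<zeta> = 1 + z * deriv L z"
      by (simp add: DERIV_imp_deriv mult.commute)
    ultimately show ?thesis
      using Re_pos[OF z] by simp
  qed
  moreover have "open H" "convex H"
    unfolding H_def by (simp_all add: open_halfspace_Re_lt convex_halfspace_Re_lt)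
  ultimately have "inj_on G H"
    using Noshiro_Warschawski by blast
  thus ?thesis
    using inj_on_ball_if_inj_on_log_lift[OF \<phi>_eq] unfolding G_def[abs_def] H_def by blast
qed

lemma norm_deriv_diff_le:
  assumes "f holomorphic_on S" "g holomorphic_on S" "open S" "cball z r \<subseteq> S" "r > 0"
    and bound: "\<And>w. dist z w = r \<Longrightarrow> norm (f w - g w) \<le> B"
  shows "norm (deriv f z - deriv g z) \<le> B / r"
proof -
  have hol: "(\<lambda>w. f w - g w) holomorphic_on S" using assms(1,2) by (intro holomorphic_intros)
  have "norm ((deriv ^^ 1) (\<lambda>w. f w - g w) z) \<le> fact 1 * B / r ^ 1"
  proof (rule Cauchy_inequality)
    show "(\<lambda>w. f w - g w) holomorphic_on ball z r"
      using hol assms(4) ball_subset_cball holomorphic_on_subset by blast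
    show "continuous_on (cball z r) (\<lambda>w. f w - g w)"
      using hol assms(4) holomorphic_on_imp_continuous_on continuous_on_subset by blast
  qed (use assms(5) bound in \<open>auto simp: dist_norm\<close>)
  moreover have "deriv (\<lambda>w. f w - g w) z = deriv f z - deriv g z"
    using assms(1-4) centre_in_cball[of z r] \<open>r > 0\<close>
    by (intro deriv_diff holomorphic_on_imp_differentiable_at[of _ S]) auto
  ultimately show ?thesis by simp
qed

text \<open>By the Cauchy estimate, uniform closeness of \<open>f(\<cdot>, t)\<close> and \<open>f(\<cdot>, t\<^sub>0)\<close> on a circle
  controls their derivatives at its centre.\<close>
lemma deriv_holomorphic_family_close:
  fixes f :: "complex \<Rightarrow> real \<Rightarrow> complex"
  assumes "open S" "closed T"
    and hol: "\<And>t. t \<in> T \<Longrightarrow> (\<lambda>z. f z t) holomorphic_on S"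
    and cont: "continuous_on (S \<times> T) (\<lambda>(z, t). f z t)"
    and "z0 \<in> S" "t0 \<in> T" "e > 0"
  obtains \<delta> where "\<delta> > 0" "\<And>z t. z \<in> S \<Longrightarrow> t \<in> T \<Longrightarrow> dist z z0 < \<delta> \<Longrightarrow> dist t t0 < \<delta> \<Longrightarrow>
    norm (deriv (\<lambda>w. f w t) z - deriv (\<lambda>w. f w t0) z) \<le> e"
proof -
  obtain \<rho> where "\<rho> > 0" and cb: "cball z0 (2 * \<rho>) \<subseteq> S"
    using open_contains_cball[of S] \<open>open S\<close> \<open>z0 \<in> S\<close>
    by (metis field_sum_of_halves half_gt_zero mult_2)
  define K where "K = cball z0 (2 * \<rho>) \<times> (T \<inter> cball t0 1)"
  have "compact K"
    unfolding K_def using \<open>closed T\<close> by (intro compact_Times compact_cball closed_Int_compact)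
  moreover have "K \<subseteq> S \<times> T" using cb by (auto simp: K_def)
  ultimately have "uniformly_continuous_on K (\<lambda>(z, t). f z t)"
    using compact_uniformly_continuous continuous_on_subset[OF cont] by blast
  then obtain \<delta> where "\<delta> > 0" and uc: "\<And>x x'. x \<in> K \<Longrightarrow> x' \<in> K \<Longrightarrow> dist x' x < \<delta> \<Longrightarrow>
      dist ((\<lambda>(z, t). f z t) x') ((\<lambda>(z, t). f z t) x) < e * \<rho>"
    unfolding uniformly_continuous_on_def using \<open>e > 0\<close> \<open>\<rho> > 0\<close> by (metis mult_pos_pos)
  show ?thesis
  proof (rule that[of "min \<rho> (min \<delta> 1)"])
    show "min \<rho> (min \<delta> 1) > 0" using \<open>\<rho> > 0\<close> \<open>\<delta> > 0\<close> by simp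
    fix z t assume "z \<in> S" "t \<in> T" and dz: "dist z z0 < min \<rho> (min \<delta> 1)"
      and dt: "dist t t0 < min \<rho> (min \<delta> 1)"
    have cbz: "cball z \<rho> \<subseteq> cball z0 (2 * \<rho>)"
    proof
      fix w assume "w \<in> cball z \<rho>"
      moreover have "dist z0 w \<le> dist z0 z + dist z w" by (rule dist_triangle)
      ultimately show "w \<in> cball z0 (2 * \<rho>)" using dz by (simp add: dist_commute)
    qed
    have "norm (f w t - f w t0) \<le> e * \<rho>" if "dist z w = \<rho>" for w
    proof -
      have "w \<in> cball z0 (2 * \<rho>)" using that cbz by auto
      hence "(w, t) \<in> K" "(w, t0) \<in> K"
        using \<open>t \<in> T\<close> \<open>t0 \<in> T\<close> dt by (auto simp: K_def dist_commute)
      moreover have "dist (w, t) (w, t0) < \<delta>" using dt by (simp add: dist_Pair_Pair)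
      ultimately show ?thesis using uc by (fastforce simp: dist_norm)
    qed
    hence "norm (deriv (\<lambda>w. f w t) z - deriv (\<lambda>w. f w t0) z) \<le> e * \<rho> / \<rho>"
      using cbz cb \<open>\<rho> > 0\<close> \<open>open S\<close> hol \<open>t \<in> T\<close> \<open>t0 \<in> T\<close>
      by (intro norm_deriv_diff_le[of _ S]) auto
    thus "norm (deriv (\<lambda>w. f w t) z - deriv (\<lambda>w. f w t0) z) \<le> e" using \<open>\<rho> > 0\<close> by simp
  qed
qed

lemma continuous_on_deriv_holomorphic_family:
  fixes f :: "complex \<Rightarrow> real \<Rightarrow> complex"
  assumes "open S" "closed T"
    and hol: "\<And>t. t \<in> T \<Longrightarrow> (\<lambda>z. f z t) holomorphic_on S"
    and cont: "continuous_on (S \<times> T) (\<lambda>(z, t). f z t)"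
  shows "continuous_on (S \<times> T) (\<lambda>(z, t). deriv (\<lambda>w. f w t) z)"
  unfolding continuous_on_iff
proof (intro ballI allI impI)
  fix x and e :: real assume "x \<in> S \<times> T" and "e > 0"
  then obtain z0 t0 where x: "x = (z0, t0)" and "z0 \<in> S" "t0 \<in> T" by auto
  obtain \<delta>1 where "\<delta>1 > 0" and close: "\<And>z t. z \<in> S \<Longrightarrow> t \<in> T \<Longrightarrow> dist z z0 < \<delta>1 \<Longrightarrow>
      dist t t0 < \<delta>1 \<Longrightarrow> norm (deriv (\<lambda>w. f w t) z - deriv (\<lambda>w. f w t0) z) \<le> e / 2"
    using deriv_holomorphic_family_close[OF assms \<open>z0 \<in> S\<close> \<open>t0 \<in> T\<close>, of "e / 2"] \<open>e > 0\<close> by auto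
  have "continuous_on S (deriv (\<lambda>w. f w t0))"
    using holomorphic_deriv[OF hol[OF \<open>t0 \<in> T\<close>] \<open>open S\<close>] holomorphic_on_imp_continuous_on by blast
  then obtain \<delta>2 where "\<delta>2 > 0" and dc: "\<And>z. z \<in> S \<Longrightarrow> dist z z0 < \<delta>2 \<Longrightarrow>
      dist (deriv (\<lambda>w. f w t0) z) (deriv (\<lambda>w. f w t0) z0) < e / 2"
    unfolding continuous_on_iff using \<open>z0 \<in> S\<close> \<open>e > 0\<close> by (metis half_gt_zero)
  show "\<exists>d>0. \<forall>x'\<in>S \<times> T. dist x' x < d \<longrightarrow>
          dist ((\<lambda>(z, t). deriv (\<lambda>w. f w t) z) x') ((\<lambda>(z, t). deriv (\<lambda>w. f w t) z) x) < e"
  proof (intro exI[of _ "min \<delta>1 \<delta>2"] conjI ballI impI)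
    show "min \<delta>1 \<delta>2 > 0" using \<open>\<delta>1 > 0\<close> \<open>\<delta>2 > 0\<close> by simp
    fix x' assume "x' \<in> S \<times> T" and "dist x' x < min \<delta>1 \<delta>2"
    then obtain z t where x': "x' = (z, t)" and "z \<in> S" "t \<in> T" by auto
    have "dist z z0 < min \<delta>1 \<delta>2" "dist t t0 < min \<delta>1 \<delta>2"
      using dist_fst_le[of x' x] dist_snd_le[of x' x] \<open>dist x' x < min \<delta>1 \<delta>2\<close> x x' by auto
    hence "norm (deriv (\<lambda>w. f w t) z - deriv (\<lambda>w. f w t0) z) \<le> e / 2"
      and "dist (deriv (\<lambda>w. f w t0) z) (deriv (\<lambda>w. f w t0) z0) < e / 2"
      using close[OF \<open>z \<in> S\<close> \<open>t \<in> T\<close>] dc[OF \<open>z \<in> S\<close>] by auto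
    hence "dist (deriv (\<lambda>w. f w t) z) (deriv (\<lambda>w. f w t0) z0) < e"
      using dist_triangle[of "deriv (\<lambda>w. f w t) z" "deriv (\<lambda>w. f w t0) z0"
          "deriv (\<lambda>w. f w t0) z"] by (simp add: dist_norm)
    thus "dist ((\<lambda>(z, t). deriv (\<lambda>w. f w t) z) x') ((\<lambda>(z, t). deriv (\<lambda>w. f w t) z) x) < e"
      using x x' by simp
  qed
qed

lemma has_vector_derivative_holomorphic_family_along_curve:
  fixes f :: "complex \<Rightarrow> real \<Rightarrow> complex" and \<zeta> :: "real \<Rightarrow> complex"
  assumes "convex S" "open S"
    and hol: "\<And>t. t \<in> T \<Longrightarrow> (\<lambda>z. f z t) holomorphic_on S"
    and cont: "continuous_on (S \<times> T) (\<lambda>(z, t). deriv (\<lambda>w. f w t) z)"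
    and ft: "((\<lambda>t. f (\<zeta> s) t) has_vector_derivative F) (at s within T)"
    and \<zeta>: "(\<zeta> has_vector_derivative Z) (at s within U)"
    and "U \<subseteq> T" "\<zeta> ` U \<subseteq> S" "s \<in> U"
  shows "((\<lambda>s. f (\<zeta> s) s) has_vector_derivative F + deriv (\<lambda>w. f w s) (\<zeta> s) * Z) (at s within U)"
proof -
  define Df where "Df t w = blinfun_mult_right (deriv (\<lambda>v. f v t) w)" for t w
  have fz: "((\<lambda>w. f w t) has_derivative blinfun_apply (Df t w)) (at w within S)"
    if "t \<in> T" "w \<in> S" for t w
    using holomorphic_derivI[OF hol[OF that(1)] \<open>open S\<close> that(2)]
    unfolding Df_def has_field_derivative_def blinfun_mult_right.rep_eq
    by (rule has_derivative_at_withinI)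
  have "continuous_on (T \<times> S) (\<lambda>x. deriv (\<lambda>w. f w (fst x)) (snd x))"
  proof (rule continuous_on_compose2[OF cont, of _ "\<lambda>x. (snd x, fst x)", simplified])
    show "continuous_on (T \<times> S) (\<lambda>x. (snd x, fst x))" by (intro continuous_intros)
  qed auto
  hence "continuous_on (T \<times> S) (\<lambda>(t, w). Df t w)"
    unfolding Df_def case_prod_unfold
    by (rule continuous_on_compose2[OF linear_continuous_on[OF bounded_linear_blinfun_mult_right]]) auto
  hence Df_cont: "continuous (at (s, \<zeta> s) within T \<times> S) (\<lambda>(t, w). Df t w)"
    using \<open>U \<subseteq> T\<close> \<open>\<zeta> ` U \<subseteq> S\<close> \<open>s \<in> U\<close> continuous_on_eq_continuous_within by blast
  have "((\<lambda>(t, w). f w t) has_derivative (\<lambda>(dt, dw). dt *\<^sub>R F + Df s (\<zeta> s) dw))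
           (at (s, \<zeta> s) within T \<times> S)"
    using \<open>convex S\<close> \<open>\<zeta> ` U \<subseteq> S\<close> \<open>s \<in> U\<close>
    by (intro has_derivative_partialsI[where f = "\<lambda>t w. f w t",
          OF ft[unfolded has_vector_derivative_def] fz Df_cont]) auto
  hence F: "((\<lambda>(t, w). f w t) has_derivative (\<lambda>(dt, dw). dt *\<^sub>R F + Df s (\<zeta> s) dw))
           (at (s, \<zeta> s) within (\<lambda>s. (s, \<zeta> s)) ` U)"
    by (rule has_derivative_subset) (use \<open>U \<subseteq> T\<close> \<open>\<zeta> ` U \<subseteq> S\<close> in auto)
  have "((\<lambda>s. (s, \<zeta> s)) has_derivative (\<lambda>h. (h, h *\<^sub>R Z))) (at s within U)"
    using \<zeta> unfolding has_vector_derivative_def by (intro has_derivative_Pair has_derivative_ident)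
  from has_derivative_in_compose[OF this F]
  have "((\<lambda>s. f (\<zeta> s) s) has_derivative (\<lambda>h. h *\<^sub>R F + Df s (\<zeta> s) (h *\<^sub>R Z)))
      (at s within U)"
    by simp
  thus ?thesis
    unfolding has_vector_derivative_def Df_def blinfun_mult_right.rep_eq
    by (simp add: scaleR_conv_of_real algebra_simps)
qed

lemma real_continuous_induction:
  fixes P :: "real \<Rightarrow> bool"
  assumes "P 0"
    and limit: "\<And>t. t > 0 \<Longrightarrow> (\<And>s. 0 \<le> s \<Longrightarrow> s < t \<Longrightarrow> P s) \<Longrightarrow> P t"
    and extend: "\<And>t. t \<ge> 0 \<Longrightarrow> (\<And>s. 0 \<le> s \<Longrightarrow> s \<le> t \<Longrightarrow> P s) \<Longrightarrow> \<exists>\<epsilon>>0. \<forall>s. t < s \<and> s < t + \<epsilon> \<longrightarrow> P s"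
    and "t \<ge> 0"
  shows "P t"
proof (rule ccontr)
  define B where "B = {s. 0 \<le> s \<and> \<not> P s}"
  assume "\<not> P t"
  hence "B \<noteq> {}" using \<open>t \<ge> 0\<close> by (auto simp: B_def)
  have "bdd_below B" by (auto simp: B_def intro: bdd_belowI)
  define T where "T = Inf B"
  have "T \<ge> 0" using cInf_greatest[OF \<open>B \<noteq> {}\<close>] by (auto simp: T_def B_def)
  have below: "P s" if "0 \<le> s" "s < T" for s
    using that cInf_lower[OF _ \<open>bdd_below B\<close>, of s] by (force simp: T_def B_def)
  have "P T"
    using \<open>P 0\<close> limit below \<open>T \<ge> 0\<close> by (cases "T = 0") auto
  then obtain \<epsilon> where "\<epsilon> > 0" and above: "\<And>s. T < s \<Longrightarrow> s < T + \<epsilon> \<Longrightarrow> P s"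
    using extend[OF \<open>T \<ge> 0\<close>] below by (metis order.not_eq_order_implies_strict)
  have "T + \<epsilon> \<le> b" if "b \<in> B" for b
    using that below \<open>P T\<close> above by (force simp: B_def not_less)
  hence "T + \<epsilon> \<le> T" unfolding T_def by (rule cInf_greatest[OF \<open>B \<noteq> {}\<close>])
  thus False using \<open>\<epsilon> > 0\<close> by simp
qed

lemma has_vector_derivative_exp_mult:
  fixes \<kappa> w :: complex
  shows "((\<lambda>s. exp (\<kappa> * of_real s) * w) has_vector_derivative \<kappa> * (exp (\<kappa> * of_real s) * w)) (at s)"
proof -
  have "((\<lambda>x. exp (\<kappa> * x) * w) has_field_derivative \<kappa> * (exp (\<kappa> * of_real s) * w)) (at (of_real s))"
    by (auto intro!: derivative_eq_intros)
  from has_vector_derivative_real_field[OF this] show ?thesis by simp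
qed

locale spiral_flow =
  fixes \<phi> q :: "complex \<Rightarrow> complex" and c :: complex
  assumes phi_holo: "\<phi> holomorphic_on ball 0 1"
    and phi0: "\<phi> 0 = 0" and deriv_phi0: "deriv \<phi> 0 \<noteq> 0"
    and c_nz: "c \<noteq> 0"
    and Re_q: "\<And>z. z \<in> ball 0 1 \<Longrightarrow> Re (q z) > 0"
    and phi_eq: "\<And>z. z \<in> ball 0 1 \<Longrightarrow> z \<noteq> 0 \<Longrightarrow> z * deriv \<phi> z / \<phi> z = c / q z"
begin

lemma q_nz: "z \<in> ball 0 1 \<Longrightarrow> q z \<noteq> 0"
  using Re_q by force

lemma phi_nz: "z \<in> ball 0 1 \<Longrightarrow> z \<noteq> 0 \<Longrightarrow> \<phi> z \<noteq> 0"
  using phi_eq c_nz q_nz by force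

lemma deriv_phi_q: "z \<in> ball 0 1 \<Longrightarrow> z * deriv \<phi> z * q z = c * \<phi> z"
  using phi_eq[of z] phi_nz[of z] q_nz[of z] phi0 by (cases "z = 0") (auto simp: field_simps)

lemma deriv_phi_nz: "z \<in> ball 0 1 \<Longrightarrow> deriv \<phi> z \<noteq> 0"
  using deriv_phi_q[of z] phi_nz[of z] c_nz deriv_phi0 by (cases "z = 0") auto

lemma inj_on_phi: "inj_on \<phi> (ball 0 1)"
proof (rule inj_on_ball_if_Re_spirallike[OF phi_holo phi0 deriv_phi0])
  fix z :: complex assume z: "z \<in> ball 0 1" "z \<noteq> 0"
  have "z * deriv \<phi> z / (c * \<phi> z) = (z * deriv \<phi> z / \<phi> z) / c"
    by simp
  also have "\<dots> = 1 / q z"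
    using phi_eq[OF z] c_nz by simp
  finally show "Re (z * deriv \<phi> z / (c * \<phi> z)) > 0"
    using Re_q[OF z(1)] q_nz[OF z(1)] by (simp add: Re_divide complex_neq_0)
qed

definition D :: "complex set" where "D = \<phi> ` ball 0 1"

definition g :: "complex \<Rightarrow> complex" where "g = inv_into (ball 0 1) \<phi>"

lemma open_D: "open D"
  unfolding D_def by (rule open_mapping_thm3[OF phi_holo _ inj_on_phi]) simp

lemma phi_in_D: "z \<in> ball 0 1 \<Longrightarrow> \<phi> z \<in> D"
  unfolding D_def by blast

lemma g_phi: "z \<in> ball 0 1 \<Longrightarrow> g (\<phi> z) = z"
  unfolding g_def by (rule inv_into_f_f[OF inj_on_phi])

lemma g_in_ball: "w \<in> D \<Longrightarrow> g w \<in> ball 0 1"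
  unfolding g_def D_def by (rule inv_into_into)

lemma phi_g: "w \<in> D \<Longrightarrow> \<phi> (g w) = w"
  unfolding g_def D_def by (rule f_inv_into_f)

lemma holomorphic_g: "g holomorphic_on D"
  and g_has_field_derivative: "w \<in> D \<Longrightarrow> (g has_field_derivative 1 / deriv \<phi> (g w)) (at w)"
proof -
  obtain h where h: "h holomorphic_on D" and dh: "\<And>z. z \<in> ball 0 1 \<Longrightarrow> deriv \<phi> z * deriv h (\<phi> z) = 1"
    and h_phi: "\<And>z. z \<in> ball 0 1 \<Longrightarrow> h (\<phi> z) = z"
    using holomorphic_has_inverse[OF phi_holo _ inj_on_phi] unfolding D_def by auto
  have h_eq: "h w = g w" if "w \<in> D" for w
    using that h_phi g_phi unfolding D_def by auto
  show g: "g holomorphic_on D" using holomorphic_transform[OF h h_eq] .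
  assume w: "w \<in> D"
  have "deriv g w = deriv h w"
    using h_eq open_D w by (intro deriv_cong_ev) (auto simp: eventually_nhds intro!: exI[of _ D])
  also have "\<dots> = 1 / deriv \<phi> (g w)"
    using dh[OF g_in_ball[OF w]] phi_g[OF w] deriv_phi_nz[OF g_in_ball[OF w]] by (simp add: field_simps)
  finally show "(g has_field_derivative 1 / deriv \<phi> (g w)) (at w)"
    using holomorphic_derivI[OF g open_D w] by simp
qed

text \<open>Along a curve \<open>e' = \<kappa> e\<close> in \<open>D\<close> the preimage \<open>y = g \<circ> e\<close> moves by the Loewner vector
  field: \<open>y' = \<kappa> \<phi> y / \<phi>' y = (\<kappa> / c) y q(y)\<close>.\<close>
lemma has_vector_derivative_g_comp:
  assumes e: "(e has_vector_derivative \<kappa> * e s) (at s)" and "e s \<in> D"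
  shows "((\<lambda>s. g (e s)) has_vector_derivative \<kappa> / c * (g (e s) * q (g (e s)))) (at s)"
proof -
  define y where "y = g (e s)"
  have y: "y \<in> ball 0 1" "\<phi> y = e s"
    using g_in_ball[OF \<open>e s \<in> D\<close>] phi_g[OF \<open>e s \<in> D\<close>] by (simp_all add: y_def)
  have "((\<lambda>s. g (e s)) has_vector_derivative \<kappa> * e s * (1 / deriv \<phi> y)) (at s)"
    using field_vector_diff_chain_at[OF e g_has_field_derivative[OF \<open>e s \<in> D\<close>]]
    by (simp add: o_def y_def)
  also have "\<kappa> * e s * (1 / deriv \<phi> y) = \<kappa> / c * (y * q y)"
    using deriv_phi_q[OF y(1)] deriv_phi_nz[OF y(1)] c_nz y(2) by (simp add: field_simps)
  finally show ?thesis by (simp add: y_def)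
qed

text \<open>Since \<open>Re q > 0\<close>, the backward spiral \<open>s \<mapsto> e\<^sup>-\<^sup>c\<^sup>s w\<close> pulls back to a curve in the disc
  along which \<open>|y|\<^sup>2\<close> has derivative \<open>-2 |y|\<^sup>2 Re q(y) \<le> 0\<close>.\<close>
lemma norm_g_exp_le:
  assumes inD: "\<And>s. 0 \<le> s \<Longrightarrow> s \<le> t \<Longrightarrow> exp (- c * of_real s) * w \<in> D" and "0 \<le> t"
  shows "norm (g (exp (- c * of_real t) * w)) \<le> norm (g w)"
proof -
  define y where "y s = g (exp (- c * of_real s) * w)" for s
  have "DERIV (\<lambda>s. y s \<bullet> y s) s :> 2 * (y s \<bullet> - (y s * q (y s)))" if "0 \<le> s" "s \<le> t" for s
  proof -
    from has_vector_derivative_g_comp[OF has_vector_derivative_exp_mult inD[OF that]]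
    have "(y has_vector_derivative - (y s * q (y s))) (at s)"
      using c_nz by (simp add: y_def[abs_def])
    from has_derivative_inner[OF this[unfolded has_vector_derivative_def] this[unfolded has_vector_derivative_def]]
    show ?thesis
      unfolding has_field_derivative_def
      by (rule has_derivative_eq_rhs) (auto simp: inner_commute algebra_simps fun_eq_iff)
  qed
  moreover have "2 * (y s \<bullet> - (y s * q (y s))) \<le> 0" if "0 \<le> s" "s \<le> t" for s
  proof -
    have "y s \<bullet> (y s * q (y s)) = (norm (y s))\<^sup>2 * Re (q (y s))"
      unfolding inner_complex_def cmod_power2 by (simp add: algebra_simps power2_eq_square)
    moreover have "Re (q (y s)) > 0"
      using Re_q g_in_ball[OF inD[OF that]] by (simp add: y_def)
    ultimately show ?thesis by simp
  qed
  ultimately have "y t \<bullet> y t \<le> y 0 \<bullet> y 0"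
    by (intro DERIV_nonpos_imp_nonincreasing[OF \<open>0 \<le> t\<close>]) fastforce
  thus ?thesis by (simp add: y_def power2_norm_eq_inner[symmetric])
qed

lemma exp_mult_phi_in_D:
  assumes "z \<in> ball 0 1" "t \<ge> 0"
  shows "exp (- c * of_real t) * \<phi> z \<in> D"
proof -
  define e where "e s = exp (- c * of_real s) * \<phi> z" for s :: real
  define K where "K = \<phi> ` cball 0 (norm z)"
  have cball: "cball 0 (norm z) \<subseteq> ball 0 1" using assms(1) by auto
  hence "K \<subseteq> D" by (auto simp: K_def D_def)
  have "compact K"
    unfolding K_def using cball holomorphic_on_imp_continuous_on[OF phi_holo]
    by (intro compact_continuous_image) (auto intro: continuous_on_subset)
  have cont_e: "continuous_on UNIV e" unfolding e_def by (intro continuous_intros)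
  text \<open>The spiral stays in the compact set \<open>K\<close>, since its preimage never leaves \<open>cball 0 |z|\<close>.\<close>
  have "e t \<in> K"
  proof (rule real_continuous_induction[where P = "\<lambda>s. e s \<in> K", OF _ _ _ \<open>t \<ge> 0\<close>])
    show "e 0 \<in> K" by (simp add: e_def K_def)
  next
    fix t :: real assume "t > 0" and "\<And>s. 0 \<le> s \<Longrightarrow> s < t \<Longrightarrow> e s \<in> K"
    hence "e ` closure {0..<t} \<subseteq> K"
      using \<open>compact K\<close> cont_e
      by (intro image_closure_subset compact_imp_closed) (auto intro: continuous_on_subset)
    thus "e t \<in> K" using \<open>t > 0\<close> by auto
  next
    fix t :: real assume "t \<ge> 0" and upto: "\<And>s. 0 \<le> s \<Longrightarrow> s \<le> t \<Longrightarrow> e s \<in> K"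
    have "open (e -` D)" using open_vimage[OF open_D cont_e] .
    moreover have "t \<in> e -` D" using upto[OF \<open>t \<ge> 0\<close> order_refl] \<open>K \<subseteq> D\<close> by auto
    ultimately obtain \<epsilon> where "\<epsilon> > 0" and \<epsilon>: "ball t \<epsilon> \<subseteq> e -` D"
      using openE by blast
    have "e s \<in> K" if "t < s" "s < t + \<epsilon>" for s
    proof -
      have inD: "e r \<in> D" if "0 \<le> r" "r \<le> s" for r
      proof (cases "r \<le> t")
        case False
        hence "r \<in> ball t \<epsilon>" using that \<open>s < t + \<epsilon>\<close> by (simp add: dist_real_def)
        thus ?thesis using \<epsilon> by auto
      qed (use upto that \<open>K \<subseteq> D\<close> in auto)
      have "norm (g (e s)) \<le> norm (g (\<phi> z))"
        using norm_g_exp_le[of s "\<phi> z"] inD \<open>t \<ge> 0\<close> \<open>t < s\<close> by (simp add: e_def)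
      hence "g (e s) \<in> cball 0 (norm z)" using g_phi[OF assms(1)] by simp
      moreover have "\<phi> (g (e s)) = e s" using phi_g inD \<open>t \<ge> 0\<close> \<open>t < s\<close> by simp
      ultimately show ?thesis unfolding K_def by (metis image_eqI)
    qed
    thus "\<exists>\<epsilon>>0. \<forall>s. t < s \<and> s < t + \<epsilon> \<longrightarrow> e s \<in> K" using \<open>\<epsilon> > 0\<close> by blast
  qed
  thus ?thesis using \<open>K \<subseteq> D\<close> by (auto simp: e_def)
qed

lemma spirallike_fun_phi:
  assumes \<psi>: "exp (\<i> * of_real \<psi>) = c / of_real (norm c)"
  shows "spirallike_fun \<psi> \<phi>"
proof -
  have "homeomorphism (ball 0 1) D \<phi> g"
    unfolding homeomorphism_def
    using holomorphic_on_imp_continuous_on[OF phi_holo] holomorphic_on_imp_continuous_on[OF holomorphic_g]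
      g_in_ball g_phi phi_g
    by (auto simp: D_def image_iff)
  hence "simply_connected D"
    using homeomorphic_simply_connected convex_imp_simply_connected[OF convex_ball]
    unfolding homeomorphic_def by blast
  moreover have "connected D"
    unfolding D_def using holomorphic_on_imp_continuous_on[OF phi_holo]
    by (rule connected_continuous_image[OF _ connected_ball])
  moreover have "w * exp (- exp (\<i> * of_real \<psi>) * of_real s) \<in> D" if "w \<in> D" "s \<ge> 0" for w s
  proof -
    obtain z where z: "z \<in> ball 0 1" "w = \<phi> z" using \<open>w \<in> D\<close> by (auto simp: D_def)
    have "w * exp (- exp (\<i> * of_real \<psi>) * of_real s) = exp (- c * of_real (s / norm c)) * \<phi> z"
      unfolding \<psi> using z by (simp add: mult.commute)
    also have "\<dots> \<in> D" using exp_mult_phi_in_D[OF z(1), of "s / norm c"] \<open>s \<ge> 0\<close> by simp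
    finally show ?thesis .
  qed
  ultimately show ?thesis
    unfolding spirallike_fun_def spirallike_domain_def D_def[symmetric]
    using phi_holo inj_on_phi phi0 open_D phi_in_D[of 0] by auto
qed

end

locale radial_loewner_flow = spiral_flow \<phi> "\<lambda>z. p z - \<i> * of_real a" c
  for \<phi> p :: "complex \<Rightarrow> complex" and a :: real and c :: complex
begin

definition flow :: "complex \<Rightarrow> real \<Rightarrow> complex" where
  "flow z t = g (exp (- c * of_real t) * \<phi> (exp (- \<i> * of_real (a * t)) * z))"

lemma rotation_in_ball: "z \<in> ball 0 1 \<Longrightarrow> exp (\<i> * of_real x) * z \<in> ball 0 1"
  by (simp add: norm_mult)

lemma flow_argument_in_D:
  "z \<in> ball 0 1 \<Longrightarrow> t \<ge> 0 \<Longrightarrow> exp (- c * of_real t) * \<phi> (exp (- \<i> * of_real (a * t)) * z) \<in> D"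
  using exp_mult_phi_in_D rotation_in_ball[of z "- a * t"] by simp

lemma deriv_phi_p: "u \<in> ball 0 1 \<Longrightarrow> u * deriv \<phi> u * p u = c * \<phi> u + \<i> * of_real a * u * deriv \<phi> u"
  using deriv_phi_q[of u] by (simp add: algebra_simps)

lemma holomorphic_flow: "t \<ge> 0 \<Longrightarrow> (\<lambda>z. flow z t) holomorphic_on ball 0 1"
  unfolding flow_def using flow_argument_in_D rotation_in_ball[of _ "- a * t"]
  by (intro holomorphic_on_compose_gen[OF _ holomorphic_g, unfolded o_def] holomorphic_intros
        holomorphic_on_compose_gen[OF _ phi_holo, unfolded o_def]) auto

lemma continuous_flow: "continuous_on (ball 0 1 \<times> {0..}) (\<lambda>(z, t). flow z t)"
proof -
  have "continuous_on (ball 0 1 \<times> {0..}) (\<lambda>x. \<phi> (exp (- \<i> * of_real (a * snd x)) * fst x))"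
    using rotation_in_ball[of _ "- a * _"]
    by (intro continuous_on_compose2[OF holomorphic_on_imp_continuous_on[OF phi_holo]] continuous_intros) auto
  hence "continuous_on (ball 0 1 \<times> {0..})
           (\<lambda>x. exp (- c * of_real (snd x)) * \<phi> (exp (- \<i> * of_real (a * snd x)) * fst x))"
    by (intro continuous_intros)
  hence "continuous_on (ball 0 1 \<times> {0..})
           (\<lambda>x. g (exp (- c * of_real (snd x)) * \<phi> (exp (- \<i> * of_real (a * snd x)) * fst x)))"
    using flow_argument_in_D
    by (intro continuous_on_compose2[OF holomorphic_on_imp_continuous_on[OF holomorphic_g]]) auto
  thus ?thesis by (simp add: flow_def case_prod_unfold)
qed

lemma deriv_flow:
  assumes "z \<in> ball 0 1" "t \<ge> 0"
  defines "R \<equiv> exp (- \<i> * of_real (a * t))"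
  shows "deriv (\<lambda>w. flow w t) z = exp (- c * of_real t) * deriv \<phi> (R * z) * R / deriv \<phi> (flow z t)"
proof -
  define X where "X = exp (- c * of_real t)"
  have u: "R * z \<in> ball 0 1" using rotation_in_ball[OF assms(1), of "- a * t"] by (simp add: R_def)
  have V: "X * \<phi> (R * z) \<in> D" using flow_argument_in_D[OF assms(1,2)] by (simp add: X_def R_def)
  have "((\<lambda>w. \<phi> (R * w)) has_field_derivative deriv \<phi> (R * z) * R) (at z)"
    using holomorphic_derivI[OF phi_holo _ u]
    by (intro DERIV_chain2[of \<phi> _ "\<lambda>w. R * w"]) (auto intro!: derivative_eq_intros)
  hence "((\<lambda>w. X * \<phi> (R * w)) has_field_derivative X * (deriv \<phi> (R * z) * R)) (at z)"
    by (auto intro!: derivative_eq_intros)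
  hence "((\<lambda>w. g (X * \<phi> (R * w))) has_field_derivative
           1 / deriv \<phi> (g (X * \<phi> (R * z))) * (X * (deriv \<phi> (R * z) * R))) (at z)"
    using g_has_field_derivative[OF V] by (intro DERIV_chain2[of g _ "\<lambda>w. X * \<phi> (R * w)"])
  thus ?thesis
    by (intro DERIV_imp_deriv) (simp add: flow_def R_def X_def mult.assoc)
qed

lemma flow_has_vector_derivative:
  assumes "z \<in> ball 0 1" "t \<ge> 0"
  shows "((\<lambda>s. flow z s) has_vector_derivative
           - z * deriv (\<lambda>w. flow w t) z * p (exp (- \<i> * of_real (a * t)) * z)) (at t)"
proof -
  define R where "R = exp (- \<i> * of_real (a * t))"
  define X where "X = exp (- c * of_real t)"
  define u where "u = R * z"
  have u: "u \<in> ball 0 1" using rotation_in_ball[OF assms(1), of "- a * t"] by (simp add: u_def R_def)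
  define W where "W s = exp (- c * of_real s) * \<phi> (exp (- \<i> * of_real a * of_real s) * z)" for s
  have V: "W t \<in> D" using flow_argument_in_D[OF assms] by (simp add: W_def mult.assoc)
  define W' where "W' = X * (- c * \<phi> u - \<i> * of_real a * u * deriv \<phi> u)"
  have "((\<lambda>w. \<phi> (exp (- \<i> * of_real a * w) * z)) has_field_derivative deriv \<phi> u * (- \<i> * of_real a * u))
          (at (of_real t))"
    using holomorphic_derivI[OF phi_holo _ u]
    by (intro DERIV_chain2[of \<phi> _ "\<lambda>w. exp (- \<i> * of_real a * w) * z"])
      (auto intro!: derivative_eq_intros simp: u_def R_def mult.assoc)
  hence "((\<lambda>w. exp (- c * w) * \<phi> (exp (- \<i> * of_real a * w) * z)) has_field_derivative W') (at (of_real t))"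
    by (auto intro!: derivative_eq_intros simp: W'_def X_def u_def R_def algebra_simps)
  from has_vector_derivative_real_field[OF this]
  have "(W has_vector_derivative W') (at t)" by (simp add: W_def[abs_def])
  from field_vector_diff_chain_at[OF this g_has_field_derivative[OF V]]
  have "((\<lambda>s. flow z s) has_vector_derivative W' * (1 / deriv \<phi> (flow z t))) (at t)"
    by (simp add: o_def flow_def W_def mult.assoc)
  moreover have "W' = - X * (u * deriv \<phi> u * p u)"
    unfolding deriv_phi_p[OF u] by (simp add: W'_def algebra_simps)
  ultimately show ?thesis
    using deriv_flow[OF assms] by (simp add: u_def R_def X_def algebra_simps)
qed

lemma loewner_solution_flow: "loewner_solution p a flow"
  unfolding loewner_solution_def
proof (intro conjI allI impI ballI)
  show "z \<in> ball 0 1 \<Longrightarrow> flow z 0 = z" for z by (simp add: flow_def g_phi)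
  show "((\<lambda>s. flow z s) has_vector_derivative
          - z * deriv (\<lambda>w. flow w t) z * p (exp (- \<i> * of_real (a * t)) * z)) (at t within {0..})"
    if "z \<in> ball 0 1" "t \<ge> 0" for z t
    using flow_has_vector_derivative[OF that] by (rule has_vector_derivative_at_within)
qed (simp_all add: holomorphic_flow continuous_flow)

lemma characteristic_curve:
  assumes "z \<in> ball 0 1" "t \<ge> 0"
  obtains \<zeta> where "\<And>s. s \<le> t \<Longrightarrow> \<zeta> s \<in> ball 0 1" "\<zeta> t = z" "\<zeta> 0 = flow z t"
    "\<And>s. s \<le> t \<Longrightarrow> (\<zeta> has_vector_derivative \<zeta> s * p (exp (- \<i> * of_real (a * s)) * \<zeta> s)) (at s)"
proof
  define u where "u = exp (- \<i> * of_real (a * t)) * z"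
  have u: "u \<in> ball 0 1" using rotation_in_ball[OF assms(1), of "- a * t"] by (simp add: u_def)
  define w where "w = exp (- c * of_real t) * \<phi> u"
  define y where "y s = g (exp (c * of_real s) * w)" for s
  define \<zeta> where "\<zeta> s = exp (\<i> * of_real (a * s)) * y s" for s
  have inD: "exp (c * of_real s) * w \<in> D" if "s \<le> t" for s
    using exp_mult_phi_in_D[OF u, of "t - s"] that
    by (simp add: w_def mult.assoc exp_add[symmetric] algebra_simps)
  hence y: "y s \<in> ball 0 1" if "s \<le> t" for s using that g_in_ball by (simp add: y_def)
  show "\<zeta> s \<in> ball 0 1" if "s \<le> t" for s
    using y[OF that] by (simp add: \<zeta>_def norm_mult)
  have "y t = u" using g_phi[OF u] by (simp add: y_def w_def mult.assoc[symmetric] exp_add[symmetric])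
  thus "\<zeta> t = z" by (simp add: \<zeta>_def u_def exp_add[symmetric])
  show "\<zeta> 0 = flow z t" by (simp add: \<zeta>_def y_def w_def u_def flow_def)
  fix s assume "s \<le> t"
  have "(y has_vector_derivative y s * (p (y s) - \<i> * of_real a)) (at s)"
    using has_vector_derivative_g_comp[OF has_vector_derivative_exp_mult inD[OF \<open>s \<le> t\<close>]] c_nz
    by (simp add: y_def[abs_def])
  moreover have "((\<lambda>s. exp (\<i> * of_real (a * s))) has_vector_derivative
                   \<i> * of_real a * exp (\<i> * of_real (a * s))) (at s)"
    using has_vector_derivative_exp_mult[of "\<i> * of_real a" 1 s] by (simp add: mult.assoc)
  ultimately have "(\<zeta> has_vector_derivative \<zeta> s * p (y s)) (at s)"
    unfolding \<zeta>_def[abs_def] by (auto dest: has_vector_derivative_mult simp: algebra_simps)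
  moreover have "y s = exp (- \<i> * of_real (a * s)) * \<zeta> s"
    by (simp add: \<zeta>_def exp_minus field_simps)
  ultimately show "(\<zeta> has_vector_derivative \<zeta> s * p (exp (- \<i> * of_real (a * s)) * \<zeta> s)) (at s)"
    by simp
qed

lemma loewner_solution_unique:
  assumes f: "loewner_solution p a f" and "z \<in> ball 0 1" "t \<ge> 0"
  shows "f z t = flow z t"
proof -
  have hol: "\<And>s. s \<in> {0..} \<Longrightarrow> (\<lambda>z. f z s) holomorphic_on ball 0 1"
    and init: "\<And>z. z \<in> ball 0 1 \<Longrightarrow> f z 0 = z"
    and pde: "\<And>z s. z \<in> ball 0 1 \<Longrightarrow> s \<ge> 0 \<Longrightarrow> ((\<lambda>s. f z s) has_vector_derivative
         - z * deriv (\<lambda>w. f w s) z * p (exp (- \<i> * of_real (a * s)) * z)) (at s within {0..})"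
    using f unfolding loewner_solution_def by auto
  have cont: "continuous_on (ball 0 1 \<times> {0..}) (\<lambda>(z, s). deriv (\<lambda>w. f w s) z)"
    using f unfolding loewner_solution_def
    by (intro continuous_on_deriv_holomorphic_family[OF open_ball closed_atLeast hol]) auto
  obtain \<zeta> where \<zeta>: "\<And>s. s \<le> t \<Longrightarrow> \<zeta> s \<in> ball 0 1" "\<zeta> t = z" "\<zeta> 0 = flow z t"
    and \<zeta>': "\<And>s. s \<le> t \<Longrightarrow> (\<zeta> has_vector_derivative \<zeta> s * p (exp (- \<i> * of_real (a * s)) * \<zeta> s)) (at s)"
    using characteristic_curve[OF assms(2,3)] by blast
  have "\<zeta> ` {0..t} \<subseteq> ball 0 1" using \<zeta>(1) by auto
  hence deriv0: "((\<lambda>s. f (\<zeta> s) s) has_vector_derivative 0) (at s within {0..t})" if "s \<in> {0..t}" for s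
    using has_vector_derivative_holomorphic_family_along_curve[OF convex_ball open_ball hol cont
        pde[OF \<zeta>(1)] has_vector_derivative_at_within[OF \<zeta>'], where s = s and U = "{0..t}"] that
    by (auto simp: algebra_simps)
  obtain k where "\<And>s. s \<in> {0..t} \<Longrightarrow> f (\<zeta> s) s = k"
    using has_vector_derivative_zero_constant[of "{0..t}", OF convex_closed_interval deriv0] by blast
  hence "f (\<zeta> t) t = f (\<zeta> 0) 0" using \<open>t \<ge> 0\<close> by simp
  thus ?thesis using \<zeta> init[OF \<zeta>(1)[of 0]] \<open>t \<ge> 0\<close> by simp
qed

end

lemma exp_arccot_minus_pi_half:
  assumes "b > 0"
  shows "exp (\<i> * of_real (arccot (a / b) - pi / 2))
           = (of_real b - \<i> * of_real a) / of_real (norm (of_real b - \<i> * of_real a))"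
proof -
  define x where "x = a / b"
  have norm: "norm (of_real b - \<i> * of_real a) = b * sqrt (1 + x\<^sup>2)"
  proof -
    have "b\<^sup>2 + a\<^sup>2 = b\<^sup>2 * (1 + x\<^sup>2)" using assms by (simp add: x_def field_simps)
    thus ?thesis using assms by (simp add: cmod_def real_sqrt_mult)
  qed
  have "sqrt (1 + x\<^sup>2) > 0" by (simp add: add_pos_nonneg)
  have "exp (\<i> * of_real (arccot (a / b) - pi / 2)) = cis (- arctan x)"
    by (simp add: cis_conv_exp arccot_def x_def)
  also have "\<dots> = Complex (1 / sqrt (1 + x\<^sup>2)) (- (x / sqrt (1 + x\<^sup>2)))"
    by (simp add: cis.ctr cos_arctan sin_arctan)
  also have "\<dots> = (of_real b - \<i> * of_real a) / of_real (norm (of_real b - \<i> * of_real a))"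
    unfolding norm using assms \<open>sqrt (1 + x\<^sup>2) > 0\<close>
    by (simp add: complex_eq_iff Re_divide_of_real Im_divide_of_real x_def field_simps)
  finally show ?thesis .
qed

theorem proposition3p8:
  fixes p \<phi> :: "complex \<Rightarrow> complex" and a b :: real
  assumes p_holo: "p holomorphic_on ball 0 1"
    and p_re: "\<forall>z\<in>ball 0 1. Re (p z) > 0"
    and p0: "p 0 = of_real b"
    and phi_holo: "\<phi> holomorphic_on ball 0 1"
    and phi0: "\<phi> 0 = 0"
    and dphi0: "deriv \<phi> 0 = 1"
    and phi_eq: "\<forall>z\<in>ball 0 1 - {0}.
                   z * deriv \<phi> z / \<phi> z = (of_real b - \<i> * of_real a) / (p z - \<i> * of_real a)"
  shows "spirallike_fun (arccot (a / b) - pi / 2) \<phi> \<and>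
         loewner_solution p a
           (\<lambda>z t. inv_into (ball 0 1) \<phi>
              (exp (- (of_real b - \<i> * of_real a) * of_real t) * \<phi> (exp (- \<i> * of_real (a * t)) * z))) \<and>
         (\<forall>f. loewner_solution p a f \<longrightarrow>
            (\<forall>z\<in>ball 0 1. \<forall>t\<ge>0. f z t = inv_into (ball 0 1) \<phi>
              (exp (- (of_real b - \<i> * of_real a) * of_real t) * \<phi> (exp (- \<i> * of_real (a * t)) * z))))"
proof -
  have "b > 0" using p_re[rule_format, of 0] p0 by simp
  interpret radial_loewner_flow \<phi> p a "of_real b - \<i> * of_real a"
  proof
    show "of_real b - \<i> * of_real a \<noteq> 0" using \<open>b > 0\<close> by (simp add: complex_eq_iff)
  qed (use phi_holo phi0 dphi0 p_re phi_eq in auto)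
  have flow: "inv_into (ball 0 1) \<phi>
      (exp (- (of_real b - \<i> * of_real a) * of_real t) * \<phi> (exp (- \<i> * of_real (a * t)) * z)) = flow z t"
    for z t by (simp add: flow_def g_def)
  show ?thesis
    unfolding flow
    using spirallike_fun_phi[OF exp_arccot_minus_pi_half[OF \<open>b > 0\<close>]] loewner_solution_flow
      loewner_solution_unique by (simp add: eta_contract_eq)
qed

end
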